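(* Fix $q\ge2$. Let $\Delta_n=\log_q n-\lceil\log_q n\rceil$ and $$F(\Delta)=\max_{z\in\{-2,-1,0\}}\Big\{\Delta-z-(\log_q e)(q-1)q^{\Delta-z-1}\Big\}.$$ Then $$\lim_{n\to\infty}\frac{\mathcal C_1(n,q)}{\frac{q^n}{n}\big(\frac{q-1}{q}\big)^2q^{F(\Delta_n)}}=1,$$ and for every $\Delta\in(-1,0]$, $\big(\frac{q-1}{q}\big)^2q^{F(\Delta)}\le\frac{q-1}{eq}$. Moreover, the latter inequality is tight: along any subsequence of $n\to\infty$ with $\Delta_n=-\log_q(q-1)$ (or $\Delta_n\to-\log_q(q-1)$), $\mathcal C_1(n,q)\cdot\frac{n}{q^n}\to\frac{q-1}{eq}$.
   Context: $\Sigma_q=\{0,\dots,q-1\}$. For integers $1\le k<n$, $\mathcal C_1(n,q,k)$ is the set of $\vec a\in\Sigma_q^n$ with $a_1=\dots=a_k=0$, $a_{k+1}\ne0$, $a_n\ne0$, and $(a_{k+2},\dots,a_{n-1})$ containing no run of $k$ consecutive zeros. $\mathcal C_1(n,q)=\max_{1\le k<n}|\mathcal C_1(n,q,k)|$. *)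

theory Defs
  imports "HOL-Analysis.Analysis"
begin

text \<open>Words of length n over the alphabet {0,...,q-1} are lists; position i (1-based)
 in the paper corresponds to list index i-1.\<close>

definition has_zero_run :: "nat \<Rightarrow> nat list \<Rightarrow> bool" where
  "has_zero_run k ys \<longleftrightarrow> (\<exists>i. i + k \<le> length ys \<and> (\<forall>j. i \<le> j \<and> j < i + k \<longrightarrow> ys ! j = 0))"

definition C1k :: "nat \<Rightarrow> nat \<Rightarrow> nat \<Rightarrow> nat list set" where
  "C1k n q k = {a. length a = n \<and> set a \<subseteq> {0..<q}
      \<and> (\<forall>i<k. a ! i = 0)
      \<and> a ! k \<noteq> 0
      \<and> a ! (n - 1) \<noteq> 0
      \<and> \<not> has_zero_run k (take (n - 1 - (k + 1)) (drop (k + 1) a))}"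

definition C1 :: "nat \<Rightarrow> nat \<Rightarrow> nat" where
  "C1 n q = Max ((\<lambda>k. card (C1k n q k)) ` {1..<n})"

definition Delta :: "nat \<Rightarrow> nat \<Rightarrow> real" where
  "Delta q n = log (real q) (real n) - real_of_int \<lceil>log (real q) (real n)\<rceil>"

definition Fq :: "nat \<Rightarrow> real \<Rightarrow> real" where
  "Fq q d = Max ((\<lambda>z::int. d - real_of_int z
      - log (real q) (exp 1) * (real q - 1) * real q powr (d - real_of_int z - 1)) ` {-2, -1, 0})"

end

theory Submission
  imports Defs
begin

text \<open>
  A word in \<open>C\<^sub>1(n,q,k)\<close> is \<open>0\<^sup>k b w c\<close> with \<open>b, c \<noteq> 0\<close> and \<open>w\<close> a word of length
  \<open>m = n - k - 2\<close> without \<open>k\<close> consecutive zeros, so \<open>|C\<^sub>1(n,q,k)| = (q - 1)\<^sup>2 A(m)\<close> where \<open>A\<close>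
  counts such words. Appending a letter shows that the density \<open>f(m) = A(m)/q\<^sup>m\<close> satisfies
  \<open>f(m + k + 1) = f(m + k) - \<delta> f(m)\<close> with \<open>\<delta> = (q - 1)/q\<^sup>k\<^sup>+\<^sup>1\<close>, hence
  \<open>f(m) = exp(-\<delta> m (1 + o(1)))\<close> uniformly as \<open>k \<rightarrow> \<infinity>\<close>. Therefore, with \<open>u = n/q\<^sup>k\<close>, the
  normalised count \<open>|C\<^sub>1(n,q,k)| n q\<^sup>-\<^sup>n (q/(q - 1))\<^sup>2\<close> is \<open>\<phi>(u)(1 + o(1))\<close> with
  \<open>\<phi>(u) = u exp(-(q - 1)u/q)\<close>, while bounded \<open>k\<close> contribute only \<open>O(1/n)\<close>. Since \<open>\<phi>\<close> increases up
  to its peak at \<open>q/(q - 1)\<close> and decreases afterwards, the best \<open>k\<close> has \<open>u\<close> among \<open>w, q w, q\<^sup>2 w\<close>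
  where \<open>w = q\<^bsup>\<Delta>\<^sub>n\<^esup> \<in> (1/q, 1]\<close>, and \<open>q\<^bsup>F(\<Delta>)\<^esup>\<close> is exactly the largest value of \<open>\<phi>\<close> at
  these three points. The peak value \<open>q/((q - 1) e)\<close> gives the bound and is reached when
  \<open>q\<^bsup>\<Delta> + 1\<^esup> = q/(q - 1)\<close>.
\<close>

lemma has_zero_run_append1: "has_zero_run k xs \<Longrightarrow> has_zero_run k (xs @ ys)"
  unfolding has_zero_run_def by (force simp: nth_append)

lemma not_has_zero_run_short: "length xs < k \<Longrightarrow> \<not> has_zero_run k xs"
  unfolding has_zero_run_def by auto

lemma has_zero_run_replicate: "has_zero_run k (xs @ replicate k 0)"
  unfolding has_zero_run_def by (rule exI[of _ "length xs"]) (auto simp: nth_append)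

lemma has_zero_run_takeD: "has_zero_run k (take j xs) \<Longrightarrow> has_zero_run k xs"
  by (metis append_take_drop_id has_zero_run_append1)

lemma has_zero_run_length_eq: "length w = k \<Longrightarrow> has_zero_run k w \<longleftrightarrow> w = replicate k 0"
proof
  assume "length w = k" "has_zero_run k w"
  then show "w = replicate k 0" unfolding has_zero_run_def by (auto intro!: nth_equalityI)
next
  assume "w = replicate k 0"
  then show "has_zero_run k w"
    using has_zero_run_replicate[where xs="[]" and k=k] by (simp del: replicate_eq_replicate)
qed

lemma has_zero_run_append_ConsD:
  assumes "y \<noteq> 0" "has_zero_run k (xs @ y # ys)"
  shows "has_zero_run k xs \<or> has_zero_run k ys"
proof -
  from assms(2) obtain i where i: "i + k \<le> length (xs @ y # ys)"
    "\<forall>j. i \<le> j \<and> j < i + k \<longrightarrow> (xs @ y # ys) ! j = 0"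
    unfolding has_zero_run_def by blast
  have "(xs @ y # ys) ! length xs \<noteq> 0" using assms(1) by simp
  then consider "i + k \<le> length xs" | "i > length xs"
    using i(2) by (metis leI add_less_cancel_left nth_append_length)
  then show ?thesis
  proof cases
    case 1
    then have "has_zero_run k xs" unfolding has_zero_run_def
      using i(2) by (intro exI[of _ i]) (auto simp: nth_append)
    then show ?thesis by blast
  next
    case 2
    have "has_zero_run k ys" unfolding has_zero_run_def
    proof (intro exI[of _ "i - length xs - 1"] conjI allI impI)
      show "i - length xs - 1 + k \<le> length ys" using i(1) 2 by auto
      fix j assume "i - length xs - 1 \<le> j \<and> j < i - length xs - 1 + k"
      then have "(xs @ y # ys) ! (j + length xs + 1) = 0" using 2 by (intro i(2)[rule_format]) auto
      then show "ys ! j = 0" by (simp add: nth_append)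
    qed
    then show ?thesis by blast
  qed
qed

definition runfree_words :: "nat \<Rightarrow> nat \<Rightarrow> nat \<Rightarrow> nat list set" where
  "runfree_words q k m = {w. length w = m \<and> set w \<subseteq> {0..<q} \<and> \<not> has_zero_run k w}"

definition runfree_count :: "nat \<Rightarrow> nat \<Rightarrow> nat \<Rightarrow> nat" where
  "runfree_count q k m = card (runfree_words q k m)"

lemma finite_runfree_words: "finite (runfree_words q k m)"
  by (rule finite_subset[OF _ finite_lists_length_eq[of "{0..<q}" m]])
    (auto simp: runfree_words_def)

lemma runfree_count_short: "m < k \<Longrightarrow> runfree_count q k m = q ^ m"
proof -
  assume "m < k"
  then have "runfree_words q k m = {w. set w \<subseteq> {0..<q} \<and> length w = m}"
    unfolding runfree_words_def using not_has_zero_run_short by auto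
  then show ?thesis unfolding runfree_count_def using card_lists_length_eq[of "{0..<q}" m] by simp
qed

lemma runfree_count_self: "q \<ge> 1 \<Longrightarrow> runfree_count q k k = q ^ k - 1"
proof -
  assume q: "q \<ge> 1"
  have "runfree_words q k k = {w. set w \<subseteq> {0..<q} \<and> length w = k} - {replicate k 0}"
    unfolding runfree_words_def using has_zero_run_length_eq by auto
  moreover have "replicate k 0 \<in> {w. set w \<subseteq> {0..<q} \<and> length w = k}" using q by auto
  ultimately show ?thesis unfolding runfree_count_def
    using card_lists_length_eq[of "{0..<q}" k] finite_lists_length_eq[of "{0..<q}" k]
    by (simp add: card_Diff_singleton)
qed

lemma runfree_words_snocD:
  assumes "a \<in> runfree_words q k (Suc m)"
  shows "butlast a \<in> runfree_words q k m" "last a < q" "a = butlast a @ [last a]"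
proof -
  have ne: "a \<noteq> []" using assms unfolding runfree_words_def by auto
  then show a_eq: "a = butlast a @ [last a]" by simp
  show "last a < q" using assms last_in_set[OF ne] unfolding runfree_words_def by auto
  have "\<not> has_zero_run k (butlast a)"
    using assms has_zero_run_append1[of k "butlast a" "[last a]"]
    unfolding runfree_words_def a_eq[symmetric] by auto
  then show "butlast a \<in> runfree_words q k m"
    using assms unfolding runfree_words_def by (auto dest: in_set_butlastD)
qed

lemma runfree_words_append_nonzero:
  assumes "v \<in> runfree_words q k m" "y \<in> {1..<q}" "j < k"
  shows "v @ y # replicate j 0 \<in> runfree_words q k (m + j + 1)"
  using assms has_zero_run_append_ConsD[of y k v "replicate j 0"]
    not_has_zero_run_short[of "replicate j (0::nat)" k]
  unfolding runfree_words_def by auto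

lemma runfree_words_snoc_has_zero_run:
  assumes w: "w \<in> runfree_words q k (m + k)" and k: "1 \<le> k"
    and run: "has_zero_run k (w @ [x])"
  obtains v y where "v \<in> runfree_words q k m" "y \<in> {1..<q}" "w @ [x] = v @ y # replicate k 0"
proof -
  define a where "a = w @ [x]"
  have lw: "length w = m + k" using w unfolding runfree_words_def by auto
  obtain i where i: "i + k \<le> length a" "\<forall>j. i \<le> j \<and> j < i + k \<longrightarrow> a ! j = 0"
    using run unfolding has_zero_run_def a_def by blast
  have ii: "i = m + 1"
  proof (rule ccontr)
    assume "i \<noteq> m + 1"
    then have "has_zero_run k w" unfolding has_zero_run_def
      using i lw unfolding a_def by (intro exI[of _ i]) (auto simp: nth_append)
    then show False using w unfolding runfree_words_def by auto
  qed
  define v where "v = take m w"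
  define y where "y = w ! m"
  have la: "length a = m + k + 1" using lw unfolding a_def by simp
  have tail: "drop (m + 1) a = replicate k 0"
    by (rule nth_equalityI) (use i ii la k in auto)
  have head: "take (m + 1) a = v @ [y]"
    unfolding v_def y_def a_def using lw k by (simp add: take_Suc_conv_app_nth)
  have a: "a = v @ y # replicate k 0"
    using head tail append_take_drop_id[of "m + 1" a] by simp
  have "y \<noteq> 0"
  proof
    assume y0: "y = 0"
    have "has_zero_run k w" unfolding has_zero_run_def
    proof (intro exI[of _ m] conjI allI impI)
      show "m + k \<le> length w" using lw by simp
      fix j assume j: "m \<le> j \<and> j < m + k"
      show "w ! j = 0"
      proof (cases "j = m")
        case True then show ?thesis using y0 y_def by simp
      next
        case False
        then have "a ! j = 0" using i(2) ii j by auto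
        then show ?thesis using j lw unfolding a_def by (simp add: nth_append)
      qed
    qed
    then show False using w unfolding runfree_words_def by auto
  qed
  moreover have "w ! m \<in> set w" using lw k by simp
  ultimately have "y \<in> {1..<q}" using w unfolding y_def runfree_words_def by auto
  moreover have "v \<in> runfree_words q k m"
    using w lw has_zero_run_takeD[of k m w] unfolding v_def runfree_words_def
    by (auto dest: in_set_takeD)
  ultimately show ?thesis using a that unfolding a_def by blast
qed

text \<open>Appending a letter to a run-free word of length \<open>m + k\<close> either keeps it run-free or
  produces exactly one of the \<open>(q - 1) A(m)\<close> words \<open>v y 0\<^sup>k\<close>.\<close>

lemma runfree_count_rec:
  assumes k: "1 \<le> k"
  shows "runfree_count q k (m + k + 1) + (q - 1) * runfree_count q k m
    = q * runfree_count q k (m + k)"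
proof -
  define Ext where "Ext = (\<lambda>(w, x). w @ [x]) ` (runfree_words q k (m + k) \<times> {0..<q})"
  define Bad where "Bad = (\<lambda>(v, y). v @ y # replicate k 0) ` (runfree_words q k m \<times> {1..<q})"
  have "inj_on (\<lambda>(w, x). w @ [x]) (runfree_words q k (m + k) \<times> {0..<q})"
    by (auto simp: inj_on_def)
  then have card_Ext: "card Ext = runfree_count q k (m + k) * q"
    unfolding Ext_def runfree_count_def by (simp add: card_image card_cartesian_product)
  have "inj_on (\<lambda>(v, y). v @ y # replicate k 0) (runfree_words q k m \<times> {1..<q})"
    by (auto simp: inj_on_def runfree_words_def)
  then have card_Bad: "card Bad = runfree_count q k m * (q - 1)"
    unfolding Bad_def runfree_count_def by (simp add: card_image card_cartesian_product)
  have disj: "runfree_words q k (m + k + 1) \<inter> Bad = {}"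
  proof (rule ccontr)
    assume "runfree_words q k (m + k + 1) \<inter> Bad \<noteq> {}"
    then obtain v y where "v @ y # replicate k 0 \<in> runfree_words q k (m + k + 1)"
      unfolding Bad_def by auto
    moreover have "has_zero_run k ((v @ [y]) @ replicate k 0)" by (rule has_zero_run_replicate)
    ultimately show False unfolding runfree_words_def by simp
  qed
  have "runfree_words q k (m + k + 1) \<subseteq> Ext"
  proof
    fix a assume "a \<in> runfree_words q k (m + k + 1)"
    then have "(butlast a, last a) \<in> runfree_words q k (m + k) \<times> {0..<q}"
      using runfree_words_snocD[of a q k "m + k"] by simp
    then show "a \<in> Ext" unfolding Ext_def
      by (rule image_eqI[rotated]) (use runfree_words_snocD[of a q k "m + k"] \<open>a \<in> _\<close> in auto)
  qed
  moreover have "Bad \<subseteq> Ext"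
  proof
    fix a assume "a \<in> Bad"
    then obtain v y where v: "v \<in> runfree_words q k m" and y: "y \<in> {1..<q}"
      and a: "a = v @ y # replicate k 0"
      unfolding Bad_def by auto
    have "v @ y # replicate (k - 1) 0 \<in> runfree_words q k (m + k)"
      using runfree_words_append_nonzero[OF v y, of "k - 1"] k by simp
    moreover have "a = (v @ y # replicate (k - 1) 0) @ [0]"
      using a k replicate_append_same[of "k - 1" "0::nat"] by (simp flip: replicate_Suc)
    moreover have "0 < q" using y by simp
    ultimately show "a \<in> Ext" unfolding Ext_def by (intro image_eqI[of _ _ "(_, 0)"]) auto
  qed
  moreover have "Ext \<subseteq> runfree_words q k (m + k + 1) \<union> Bad"
  proof
    fix a assume "a \<in> Ext"
    then obtain w x where w: "w \<in> runfree_words q k (m + k)" and x: "x < q" and a: "a = w @ [x]"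
      unfolding Ext_def by auto
    show "a \<in> runfree_words q k (m + k + 1) \<union> Bad"
    proof (cases "has_zero_run k a")
      case False
      then show ?thesis using w x a unfolding runfree_words_def by auto
    next
      case True
      then obtain v y where "v \<in> runfree_words q k m" "y \<in> {1..<q}" "a = v @ y # replicate k 0"
        using runfree_words_snoc_has_zero_run[OF w k] a by metis
      then show ?thesis unfolding Bad_def by auto
    qed
  qed
  ultimately have "runfree_words q k (m + k + 1) \<union> Bad = Ext" by blast
  moreover have "finite Ext" unfolding Ext_def using finite_runfree_words by auto
  ultimately have "card (runfree_words q k (m + k + 1)) + card Bad = card Ext"
    using card_Un_disjoint[OF _ _ disj] by (metis finite_Un)
  then show ?thesis using card_Ext card_Bad unfolding runfree_count_def by (simp add: mult.commute)
qed

lemma C1k_wordI: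
  assumes n: "n = k + m + 2" and b: "b \<in> {1..<q}" and w: "w \<in> runfree_words q k m"
    and c: "c \<in> {1..<q}"
  shows "replicate k 0 @ b # w @ [c] \<in> C1k n q k"
proof -
  let ?a = "replicate k 0 @ b # w @ [c]"
  have lw: "length w = m" using w unfolding runfree_words_def by simp
  then have "take (n - 1 - (k + 1)) (drop (k + 1) ?a) = w" using n by simp
  moreover have "?a ! (n - 1) = c" using lw n by (simp add: nth_append)
  moreover have "?a ! k = b" "\<forall>i<k. ?a ! i = 0" by (simp_all add: nth_append)
  moreover have "length ?a = n" using lw n by simp
  ultimately show ?thesis using b c w unfolding C1k_def runfree_words_def by auto
qed

lemma C1k_wordE:
  assumes n: "n = k + m + 2" and a: "a \<in> C1k n q k"
  obtains b w c where "b \<in> {1..<q}" "w \<in> runfree_words q k m" "c \<in> {1..<q}"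
    "a = replicate k 0 @ b # w @ [c]"
proof -
  define w where "w = take (n - 1 - (k + 1)) (drop (k + 1) a)"
  have la: "length a = n" and sa: "set a \<subseteq> {0..<q}" and z: "\<forall>i<k. a ! i = 0"
    and b0: "a ! k \<noteq> 0" and c0: "a ! (n - 1) \<noteq> 0" and nz: "\<not> has_zero_run k w"
    using a unfolding C1k_def w_def by auto
  have "take k a = replicate k 0"
    by (rule nth_equalityI) (use la n z in auto)
  moreover have "drop k a = a ! k # drop (k + 1) a"
    using la n by (simp add: Cons_nth_drop_Suc)
  moreover have "drop (k + 1) a = w @ [a ! (n - 1)]"
  proof -
    have "n - 1 - (k + 1) = m" using n by simp
    then have "drop (k + 1) a = w @ drop m (drop (k + 1) a)"
      by (simp only: w_def append_take_drop_id)
    moreover have "drop m (drop (k + 1) a) = [a ! (n - 1)]"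
    proof -
      have "drop m (drop (k + 1) a) = drop (n - 1) a"
        using n by (simp add: add.commute add.left_commute)
      also have "\<dots> = [a ! (n - 1)]" using la n
        by (metis Cons_nth_drop_Suc Suc_diff_1 diff_less drop_all le_refl zero_less_Suc
            add_2_eq_Suc' zero_less_one)
      finally show ?thesis .
    qed
    ultimately show ?thesis by metis
  qed
  ultimately have aeq: "a = replicate k 0 @ a ! k # w @ [a ! (n - 1)]"
    using append_take_drop_id[of k a] by simp
  have "set w \<subseteq> {0..<q}" unfolding w_def using sa
    by (meson in_set_dropD in_set_takeD subset_iff)
  then have w: "w \<in> runfree_words q k m"
    unfolding runfree_words_def using la n nz by (simp add: w_def)
  have "a ! k \<in> set a" "a ! (n - 1) \<in> set a" using la n by auto
  then have b: "a ! k \<in> {1..<q}" and c: "a ! (n - 1) \<in> {1..<q}" using sa b0 c0 by auto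
  show ?thesis by (rule that[OF b w c aeq])
qed

lemma card_C1k:
  assumes n: "n = k + m + 2"
  shows "card (C1k n q k) = (q - 1)^2 * runfree_count q k m"
proof -
  let ?word = "\<lambda>(b, w, c). replicate k (0::nat) @ b # w @ [c]"
  have "C1k n q k = ?word ` ({1..<q} \<times> runfree_words q k m \<times> {1..<q})"
  proof (intro equalityI subsetI)
    fix a assume "a \<in> C1k n q k"
    then obtain b w c where "b \<in> {1..<q}" "w \<in> runfree_words q k m" "c \<in> {1..<q}"
      "a = replicate k 0 @ b # w @ [c]"
      by (rule C1k_wordE[OF n])
    then show "a \<in> ?word ` ({1..<q} \<times> runfree_words q k m \<times> {1..<q})"
      by (intro image_eqI[of _ _ "(b, w, c)"]) auto
  qed (use C1k_wordI[OF n] in auto)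
  moreover have "inj_on ?word ({1..<q} \<times> runfree_words q k m \<times> {1..<q})"
    by (auto simp: inj_on_def runfree_words_def)
  ultimately show ?thesis
    by (simp add: card_image card_cartesian_product runfree_count_def power2_eq_square)
qed

lemma card_C1k_last_le:
  assumes n: "n \<ge> 2"
  shows "card (C1k n q (n - 1)) \<le> q - 1"
proof -
  have "C1k n q (n - 1) \<subseteq> (\<lambda>c. replicate (n - 1) 0 @ [c]) ` {1..<q}"
  proof
    fix a assume a: "a \<in> C1k n q (n - 1)"
    then have la: "length a = n" and z: "\<forall>i<n - 1. a ! i = 0" and c: "a ! (n - 1) \<noteq> 0"
      and sa: "set a \<subseteq> {0..<q}"
      unfolding C1k_def by auto
    have "a = replicate (n - 1) 0 @ [a ! (n - 1)]"
    proof (rule nth_equalityI)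
      show "length a = length (replicate (n - 1) 0 @ [a ! (n - 1)])" using la n by simp
      fix i assume i: "i < length a"
      show "a ! i = (replicate (n - 1) 0 @ [a ! (n - 1)]) ! i"
      proof (cases "i < n - 1")
        case True then show ?thesis using z by (simp add: nth_append)
      next
        case False then have "i = n - 1" using i la by simp
        then show ?thesis by (simp add: nth_append)
      qed
    qed
    moreover have "a ! (n - 1) \<in> set a" using la n by auto
    ultimately show "a \<in> (\<lambda>c. replicate (n - 1) 0 @ [c]) ` {1..<q}"
      using c sa by (intro image_eqI[where x="a ! (n - 1)"]) auto
  qed
  then have "card (C1k n q (n - 1)) \<le> card ((\<lambda>c. replicate (n - 1) (0::nat) @ [c]) ` {1..<q})"
    by (intro card_mono) auto
  also have "\<dots> \<le> q - 1" using card_image_le[of "{1..<q}" "(\<lambda>c. replicate (n - 1) (0::nat) @ [c])"] by simp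
  finally show ?thesis .
qed



definition runfree_density :: "nat \<Rightarrow> nat \<Rightarrow> nat \<Rightarrow> real" where
  "runfree_density q k m = real (runfree_count q k m) / real q ^ m"

definition run_rate :: "nat \<Rightarrow> nat \<Rightarrow> real" where
  "run_rate q k = (real q - 1) / real q ^ (k + 1)"

definition damped_rate :: "nat \<Rightarrow> nat \<Rightarrow> real" where
  "damped_rate q k = run_rate q k / (1 - 2 * real k * run_rate q k)"

locale q_ary =
  fixes q :: nat
  assumes q_ge_2: "2 \<le> q"

context q_ary
begin

context
  fixes k :: nat
  assumes k_ge_1: "1 \<le> k"
begin

lemma runfree_density_short: "m < k \<Longrightarrow> runfree_density q k m = 1"
  unfolding runfree_density_def using runfree_count_short[of m k q] q_ge_2 by simp

lemma runfree_density_self: "runfree_density q k k = 1 - 1 / real q ^ k"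
proof -
  have "real (runfree_count q k k) = real q ^ k - 1"
    using runfree_count_self[of q k] q_ge_2 by (simp add: of_nat_diff)
  then show ?thesis unfolding runfree_density_def using q_ge_2 by (simp add: field_simps)
qed

lemma runfree_density_nonneg: "0 \<le> runfree_density q k m"
  unfolding runfree_density_def by simp

lemma run_rate_pos: "0 < run_rate q k"
  unfolding run_rate_def using q_ge_2 by simp

lemma run_rate_ge: "1 / real q ^ k \<le> 2 * run_rate q k"
  unfolding run_rate_def using q_ge_2 by (simp add: field_simps)

lemma run_rate_less_1: "run_rate q k < 1"
proof -
  have "run_rate q k \<le> 1 / real q ^ k" unfolding run_rate_def using q_ge_2 by (simp add: field_simps)
  moreover have "1 / real q ^ k < 1" using q_ge_2 k_ge_1 by (simp add: field_simps one_less_power)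
  ultimately show ?thesis by simp
qed

lemma runfree_density_rec:
  "runfree_density q k (m + k + 1)
    = runfree_density q k (m + k) - run_rate q k * runfree_density q k m"
proof -
  let ?A = "\<lambda>i. real (runfree_count q k i)"
  have "?A (m + k + 1) = real q * ?A (m + k) - (real q - 1) * ?A m"
    using arg_cong[OF runfree_count_rec[OF k_ge_1, of q m], of real] q_ge_2
    by (simp add: of_nat_diff)
  then have "runfree_density q k (m + k + 1)
      = (real q * ?A (m + k) - (real q - 1) * ?A m) / real q ^ (m + k + 1)"
    unfolding runfree_density_def by simp
  also have "\<dots> = ?A (m + k) / real q ^ (m + k)
      - (real q - 1) / real q ^ (k + 1) * (?A m / real q ^ m)"
    using q_ge_2 by (simp add: field_simps power_add)
  finally show ?thesis unfolding runfree_density_def run_rate_def .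
qed

lemma runfree_density_Suc_le: "runfree_density q k (Suc m) \<le> runfree_density q k m"
proof -
  consider "Suc m < k" | "Suc m = k" | j where "m = j + k"
    by (metis le_add_diff_inverse2 not_less_eq le_neq_implies_less less_Suc_eq_le)
  then show ?thesis
  proof cases
    case (3 j)
    then show ?thesis
      using runfree_density_rec[of j] run_rate_pos runfree_density_nonneg[of j] by simp
  qed (use runfree_density_short runfree_density_self in auto)
qed

lemma runfree_density_antimono: "j \<le> m \<Longrightarrow> runfree_density q k m \<le> runfree_density q k j"
  using runfree_density_Suc_le by (intro decseqD[of "runfree_density q k"]) (auto intro: decseq_SucI)

lemma runfree_density_le_1: "runfree_density q k m \<le> 1"
  using runfree_density_antimono[of 0 m] runfree_density_short[of 0] k_ge_1 by simp

text \<open>Since \<open>f\<close> is decreasing, the recurrence gives \<open>f(m + 1) \<le> (1 - \<delta>) f(m)\<close>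
  for \<open>m \<ge> k\<close>.\<close>

lemma runfree_density_le_exp: "runfree_density q k m \<le> exp (- run_rate q k * (real m - real k))"
proof (induction m rule: less_induct)
  case (less m)
  show ?case
  proof (cases "m \<le> k")
    case True
    then have "1 \<le> exp (- run_rate q k * (real m - real k))"
      using run_rate_pos by (simp add: mult_nonneg_nonpos)
    then show ?thesis using runfree_density_le_1[of m] by linarith
  next
    case False
    then obtain j where j: "m = j + k + 1"
      by (metis add.commute add_Suc_right le_Suc_ex not_le Suc_eq_plus1 less_eq_Suc_le)
    let ?f = "runfree_density q k (j + k)"
    have "runfree_density q k m = ?f - run_rate q k * runfree_density q k j"
      using runfree_density_rec j by simp
    also have "\<dots> \<le> (1 - run_rate q k) * ?f"
      using runfree_density_antimono[of j "j + k"] run_rate_pos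
      by (simp add: algebra_simps mult_left_mono)
    also have "\<dots> \<le> exp (- run_rate q k) * exp (- run_rate q k * (real (j + k) - real k))"
    proof (rule mult_mono)
      show "1 - run_rate q k \<le> exp (- run_rate q k)"
        using exp_ge_add_one_self[of "- run_rate q k"] by simp
      show "?f \<le> exp (- run_rate q k * (real (j + k) - real k))"
        using less.IH[of "j + k"] j by simp
    qed (use run_rate_less_1 runfree_density_nonneg in auto)
    also have "\<dots> = exp (- run_rate q k * (real m - real k))"
      unfolding j by (simp add: algebra_simps flip: exp_add)
    finally show ?thesis .
  qed
qed

context
  assumes small: "4 * real k * run_rate q k \<le> 1"
begin

lemma run_rate_le_quarter: "4 * run_rate q k \<le> 1"
proof -
  have "1 * (4 * run_rate q k) \<le> real k * (4 * run_rate q k)"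
    using k_ge_1 run_rate_pos by (intro mult_right_mono) auto
  then show ?thesis using small by simp
qed

lemma one_minus_run_rate_power_ge: "1 - 2 * real k * run_rate q k \<le> (1 - 2 * run_rate q k) ^ k"
  using Bernoulli_inequality[of "- 2 * run_rate q k" k] run_rate_le_quarter by simp

text \<open>The recurrence loses at most a factor \<open>1 - 2\<delta>\<close> per step: the subtracted term
  \<open>\<delta> f(m - k)\<close> is at most \<open>2\<delta> f(m)\<close> because \<open>(1 - 2\<delta>)\<^sup>k \<ge> 1/2\<close>.\<close>

lemma runfree_density_Suc_ge_step:
  assumes IH: "\<And>j. j \<le> m \<Longrightarrow>
    (1 - 2 * run_rate q k) ^ (m - j) * runfree_density q k j \<le> runfree_density q k m"
  shows "(1 - 2 * run_rate q k) * runfree_density q k m \<le> runfree_density q k (Suc m)"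
proof -
  consider "Suc m < k" | "Suc m = k" | "k \<le> m" by linarith
  then show ?thesis
  proof cases
    case 3
    then obtain j where j: "m = j + k" using le_add_diff_inverse2 by metis
    have "1 / 2 \<le> (1 - 2 * run_rate q k) ^ k"
      using one_minus_run_rate_power_ge small by simp
    then have "(1 / 2) * runfree_density q k j
        \<le> (1 - 2 * run_rate q k) ^ k * runfree_density q k j"
      using runfree_density_nonneg by (rule mult_right_mono)
    also have "\<dots> \<le> runfree_density q k m" using IH[of j] j by simp
    finally have "run_rate q k * runfree_density q k j \<le> run_rate q k * (2 * runfree_density q k m)"
      using run_rate_pos by (intro mult_left_mono) auto
    then show ?thesis using runfree_density_rec[of j] j by (simp add: algebra_simps)
  qed (use runfree_density_short runfree_density_self run_rate_pos run_rate_ge in auto)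
qed

lemma runfree_density_geometric_lower:
  "j \<le> m \<Longrightarrow> (1 - 2 * run_rate q k) ^ (m - j) * runfree_density q k j \<le> runfree_density q k m"
proof (induction m arbitrary: j)
  case (Suc m)
  let ?r = "1 - 2 * run_rate q k"
  show ?case
  proof (cases "j = Suc m")
    case False
    then have jm: "j \<le> m" using Suc.prems by simp
    have "0 \<le> ?r" using run_rate_le_quarter by simp
    then have "?r ^ (Suc m - j) * runfree_density q k j \<le> ?r * runfree_density q k m"
      using Suc.IH[OF jm] jm by (simp add: Suc_diff_le mult.assoc mult_left_mono)
    also have "\<dots> \<le> runfree_density q k (Suc m)"
      by (rule runfree_density_Suc_ge_step[OF Suc.IH])
    finally show ?thesis .
  qed simp
qed simp

lemma damped_rate_bounds: "0 \<le> damped_rate q k" "damped_rate q k \<le> 1 / 2"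
proof -
  have pos: "1 / 2 \<le> 1 - 2 * real k * run_rate q k" using small by simp
  then show "0 \<le> damped_rate q k" unfolding damped_rate_def using run_rate_pos by simp
  have "damped_rate q k \<le> run_rate q k / (1 / 2)"
    unfolding damped_rate_def using pos run_rate_pos by (intro divide_left_mono) auto
  then show "damped_rate q k \<le> 1 / 2" using run_rate_le_quarter by simp
qed

lemma runfree_density_Suc_ge:
  assumes "k \<le> m"
  shows "(1 - damped_rate q k) * runfree_density q k m \<le> runfree_density q k (Suc m)"
proof -
  obtain j where j: "m = j + k" using assms by (metis le_add_diff_inverse2)
  let ?c = "1 - 2 * real k * run_rate q k"
  have pos: "0 < ?c" using small run_rate_pos k_ge_1 by simp
  have "?c * runfree_density q k j \<le> (1 - 2 * run_rate q k) ^ k * runfree_density q k j"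
    by (rule mult_right_mono[OF one_minus_run_rate_power_ge runfree_density_nonneg])
  also have "\<dots> \<le> runfree_density q k m"
    using runfree_density_geometric_lower[of j m] j by simp
  finally have "runfree_density q k j \<le> runfree_density q k m / ?c"
    using pos by (simp add: field_simps)
  then have "run_rate q k * runfree_density q k j \<le> run_rate q k * (runfree_density q k m / ?c)"
    using run_rate_pos by (intro mult_left_mono) auto
  then show ?thesis
    using runfree_density_rec[of j] j unfolding damped_rate_def by (simp add: algebra_simps)
qed

lemma runfree_density_ge_power:
  "(1 - 1 / real q ^ k) * (1 - damped_rate q k) ^ m \<le> runfree_density q k m"
proof -
  let ?x = "damped_rate q k"
  have x0: "0 \<le> 1 - ?x" "1 - ?x \<le> 1" using damped_rate_bounds by auto
  have a0: "0 \<le> 1 - 1 / real q ^ k" using q_ge_2 by (simp add: field_simps one_le_power)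
  show ?thesis
  proof (cases "m < k")
    case True
    have "(1 - 1 / real q ^ k) * (1 - ?x) ^ m \<le> 1 * 1"
      using x0 a0 by (intro mult_mono) (auto simp: power_le_one)
    then show ?thesis using runfree_density_short[OF True] by simp
  next
    case False
    then obtain t where t: "m = k + t" by (metis le_add_diff_inverse not_less)
    have "(1 - ?x) ^ t * runfree_density q k k \<le> runfree_density q k (k + t)"
    proof (induction t)
      case (Suc t)
      have "(1 - ?x) ^ Suc t * runfree_density q k k \<le> (1 - ?x) * runfree_density q k (k + t)"
        using Suc.IH x0 by (simp add: mult.assoc mult_left_mono)
      also have "\<dots> \<le> runfree_density q k (Suc (k + t))" by (rule runfree_density_Suc_ge) simp
      finally show ?case by simp
    qed simp
    moreover have "(1 - ?x) ^ m \<le> (1 - ?x) ^ t" unfolding t using x0 by (simp add: power_decreasing)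
    ultimately show ?thesis unfolding t using runfree_density_self a0 x0
      by (smt (verit, ccfv_SIG) mult_right_mono mult.commute zero_le_power)
  qed
qed

lemma runfree_density_ge_exp:
  "(1 - 1 / real q ^ k) * exp (- real m * (damped_rate q k + 2 * (damped_rate q k)^2))
    \<le> runfree_density q k m"
proof -
  let ?x = "damped_rate q k"
  have x: "0 \<le> ?x" "?x \<le> 1/2" using damped_rate_bounds by auto
  have a0: "0 \<le> 1 - 1 / real q ^ k" using q_ge_2 by (simp add: field_simps one_le_power)
  have "real m * (- ?x - 2 * ?x^2) \<le> real m * ln (1 - ?x)"
    using ln_one_minus_pos_lower_bound[OF x] by (intro mult_left_mono) auto
  then have "exp (- real m * (?x + 2 * ?x^2)) \<le> exp (real m * ln (1 - ?x))"
    by (simp add: algebra_simps)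
  also have "\<dots> = (1 - ?x) ^ m" using x by (simp add: exp_of_nat_mult)
  finally show ?thesis using runfree_density_ge_power a0 by (smt (verit, ccfv_SIG) mult_left_mono)
qed

end

end

end

definition phi :: "nat \<Rightarrow> real \<Rightarrow> real" where
  "phi q u = u * exp (- ((real q - 1) / real q) * u)"

definition ceil_log :: "nat \<Rightarrow> nat \<Rightarrow> nat" where
  "ceil_log q n = nat \<lceil>log (real q) (real n)\<rceil>"

context q_ary
begin

lemma ratio_q_bounds:
  "1/2 \<le> (real q - 1) / real q" "(real q - 1) / real q \<le> 1" "0 < (real q - 1) / real q"
  using q_ge_2 by (auto simp: field_simps)

lemma phi_nonneg: "0 \<le> u \<Longrightarrow> 0 \<le> phi q u" unfolding phi_def by simp

lemma phi_mono_below_peak: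
  assumes "0 \<le> a" "a \<le> c" "c \<le> real q / (real q - 1)"
  shows "phi q a \<le> phi q c"
proof -
  define b where "b = (real q - 1) / real q"
  have b: "0 < b" unfolding b_def using ratio_q_bounds by simp
  have bc: "b * c \<le> 1" using assms(3) q_ge_2 unfolding b_def by (simp add: field_simps)
  have "0 \<le> (1 - b * c) * (c - a)" using bc assms by (intro mult_nonneg_nonneg) auto
  moreover have "c * (1 - b * (c - a)) - a = (1 - b * c) * (c - a)" by (simp add: algebra_simps)
  ultimately have "a \<le> c * (1 - b * (c - a))" by linarith
  also have "\<dots> \<le> c * exp (- b * (c - a))"
    using exp_ge_add_one_self[of "- b * (c - a)"] assms by (intro mult_left_mono) auto
  finally have "a \<le> c * exp (- b * (c - a))" .
  then have "a * exp (- b * a) \<le> c * exp (- b * (c - a)) * exp (- b * a)"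
    by (intro mult_right_mono) auto
  also have "\<dots> = c * exp (- b * c)" by (simp add: algebra_simps flip: exp_add)
  finally show ?thesis unfolding phi_def b_def .
qed

lemma phi_antimono_above_peak:
  assumes "real q / (real q - 1) \<le> a" "a \<le> c"
  shows "phi q c \<le> phi q a"
proof -
  define b where "b = (real q - 1) / real q"
  have b: "0 < b" unfolding b_def using ratio_q_bounds by simp
  have ba: "1 \<le> b * a" using assms(1) q_ge_2 unfolding b_def by (simp add: field_simps)
  have "0 < real q / (real q - 1)" using q_ge_2 by simp
  then have a0: "0 \<le> a" using assms(1) by linarith
  have "0 \<le> (b * a - 1) * (c - a)" using ba assms by (intro mult_nonneg_nonneg) auto
  moreover have "a * (1 + b * (c - a)) - c = (b * a - 1) * (c - a)" by (simp add: algebra_simps)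
  ultimately have "c \<le> a * (1 + b * (c - a))" by linarith
  also have "\<dots> \<le> a * exp (b * (c - a))"
    using exp_ge_add_one_self[of "b * (c - a)"] a0 by (intro mult_left_mono) auto
  finally have "c \<le> a * exp (b * (c - a))" .
  then have "c * exp (- b * c) \<le> a * exp (b * (c - a)) * exp (- b * c)"
    by (intro mult_right_mono) auto
  also have "\<dots> = a * exp (- b * a)" by (simp add: algebra_simps flip: exp_add)
  finally show ?thesis unfolding phi_def b_def .
qed

lemma phi_le_peak: "phi q u \<le> (real q / (real q - 1)) * exp (- 1)"
proof -
  define b where "b = (real q - 1) / real q"
  have b: "0 < b" unfolding b_def using ratio_q_bounds by simp
  have "b * u \<le> exp (b * u - 1)" using exp_ge_add_one_self[of "b * u - 1"] by simp
  then have "b * u * exp (- b * u) \<le> exp (b * u - 1) * exp (- b * u)" by (intro mult_right_mono) auto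
  also have "\<dots> = exp (- 1)" by (simp flip: exp_add)
  finally have "b * phi q u \<le> exp (- 1)" unfolding phi_def b_def by (simp add: algebra_simps)
  then have "phi q u \<le> exp (- 1) / b" using b by (simp add: field_simps)
  then show ?thesis unfolding b_def by (simp add: ac_simps)
qed

lemma phi_peak: "phi q (real q / (real q - 1)) = (real q / (real q - 1)) * exp (- 1)"
proof -
  have e: "- ((real q - 1) / real q) * (real q / (real q - 1)) = -1" using q_ge_2 by (simp add: field_simps)
  show ?thesis unfolding phi_def e by simp
qed

lemma phi_le_inverse: assumes "0 < u" shows "phi q u \<le> 16 / u"
proof -
  define b where "b = (real q - 1) / real q"
  have b: "1/2 \<le> b" "0 < b" unfolding b_def using ratio_q_bounds by auto
  have e: "b * u / 2 \<le> exp (b * u / 2)" using exp_ge_add_one_self[of "b * u / 2"] by linarith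
  have bu: "0 < b * u" using b assms by simp
  have "exp (- b * u) = inverse (exp (b * u / 2))^2"
    by (simp add: power2_eq_square flip: exp_add exp_minus)
  also have "\<dots> \<le> inverse (b * u / 2)^2"
    using e bu by (intro power_mono le_imp_inverse_le) auto
  finally have "u * exp (- b * u) \<le> u * inverse (b * u / 2)^2" using assms by (intro mult_left_mono) auto
  also have "\<dots> = 4 / (b * b * u)" using assms b by (simp add: field_simps power2_eq_square)
  also have "\<dots> \<le> 16 / u"
  proof -
    have "(1/2) * (1/2) \<le> b * b" by (rule mult_mono) (use b in auto)
    then have "1/4 \<le> b * b" by simp
    then show ?thesis using assms by (simp add: field_simps)
  qed
  finally show ?thesis unfolding phi_def b_def .
qed

lemma powr_Fq_summand:
  "real q powr (t - log (real q) (exp 1) * (real q - 1) * real q powr (t - 1)) = phi q (real q powr t)"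
proof -
  have q0: "0 < real q" "1 < real q" using q_ge_2 by auto
  have c: "log (real q) (exp 1) * ln (real q) = 1" unfolding log_def using q0 by simp
  have p1: "real q powr (t - 1) = real q powr t / real q" using q0 by (simp add: powr_diff)
  have "(t - log (real q) (exp 1) * (real q - 1) * real q powr (t - 1)) * ln (real q)
      = t * ln (real q) - (log (real q) (exp 1) * ln (real q)) * (real q - 1) * real q powr (t - 1)"
  proof -
    have gen: "\<And>c a P l. (t - c * a * P) * l = t * l - (c * l) * a * P" by (simp add: algebra_simps)
    show ?thesis by (rule gen)
  qed
  also have "\<dots> = t * ln (real q) - ((real q - 1) / real q) * real q powr t"
    unfolding c p1 by simp
  finally show ?thesis
    using q0 by (simp add: powr_def phi_def exp_diff divide_inverse exp_minus)
qed

lemma powr_Fq_eq_max_phi: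
  "real q powr Fq q d = max (phi q (real q powr (d + 2)))
     (max (phi q (real q powr (d + 1))) (phi q (real q powr d)))"
proof -
  define h where "h t = t - log (real q) (exp 1) * (real q - 1) * real q powr (t - 1)" for t
  have Fq: "Fq q d = max (h (d + 2)) (max (h (d + 1)) (h d))"
    unfolding Fq_def h_def by (simp add: algebra_simps)
  have powr_max: "real q powr (max a b) = max (real q powr a) (real q powr b)" for a b
    using q_ge_2 by (auto simp: max_def)
  show ?thesis unfolding Fq powr_max h_def powr_Fq_summand ..
qed

lemma powr_Fq_pos: "0 < real q powr Fq q d"
proof -
  have "0 < phi q (real q powr d)" unfolding phi_def using q_ge_2 by simp
  then show ?thesis unfolding powr_Fq_eq_max_phi by simp
qed

lemma powr_Fq_le_peak: "real q powr Fq q d \<le> (real q / (real q - 1)) * exp (- 1)"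
  unfolding powr_Fq_eq_max_phi using phi_le_peak by simp

lemma powr_Fq_peak: "real q powr Fq q (- log (real q) (real q - 1)) = (real q / (real q - 1)) * exp (- 1)"
proof (rule antisym)
  define d0 where "d0 = - log (real q) (real q - 1)"
  have "real q powr d0 = inverse (real q - 1)"
    unfolding d0_def using q_ge_2 by (simp add: powr_minus)
  then have "real q powr (d0 + 1) = real q / (real q - 1)"
    unfolding powr_add using q_ge_2 by (simp add: field_simps)
  then have "phi q (real q / (real q - 1)) \<le> real q powr Fq q d0"
    unfolding powr_Fq_eq_max_phi by (metis max.cobounded1 max.coboundedI2)
  then show "(real q / (real q - 1)) * exp (- 1) \<le> real q powr Fq q (- log (real q) (real q - 1))"
    unfolding phi_peak d0_def .
qed (rule powr_Fq_le_peak)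

lemma tendsto_powr_Fq:
  "(f \<longlongrightarrow> d) F \<Longrightarrow> ((\<lambda>x. real q powr Fq q (f x)) \<longlongrightarrow> real q powr Fq q d) F"
  unfolding powr_Fq_eq_max_phi phi_def using q_ge_2 by (intro tendsto_intros) auto

lemma Fq_coefficient_le:
  "((real q - 1) / real q)^2 * real q powr Fq q d \<le> (real q - 1) / (exp 1 * real q)"
proof -
  have "((real q - 1) / real q)^2 * real q powr Fq q d
      \<le> ((real q - 1) / real q)^2 * ((real q / (real q - 1)) * exp (- 1))"
    using powr_Fq_le_peak by (intro mult_left_mono) auto
  also have "\<dots> = (real q - 1) / (exp 1 * real q)"
    using q_ge_2 by (simp add: field_simps power2_eq_square exp_minus)
  finally show ?thesis .
qed

lemma ceil_log_bounds:
  assumes n: "1 \<le> n"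
  shows "real q powr Delta q n = real n / real q ^ ceil_log q n"
    "real n \<le> real q ^ ceil_log q n" "real q ^ ceil_log q n < real q * real n"
proof -
  have q0: "0 < real q" "1 < real q" using q_ge_2 by auto
  have lg: "0 \<le> log (real q) (real n)" using n q0 by simp
  then have L: "real (ceil_log q n) = of_int \<lceil>log (real q) (real n)\<rceil>" unfolding ceil_log_def by simp
  have pL: "real q powr real (ceil_log q n) = real q ^ ceil_log q n" using q0 by (simp add: powr_realpow)
  have pn: "real q powr log (real q) (real n) = real n" using q0 n by simp
  show "real q powr Delta q n = real n / real q ^ ceil_log q n"
    unfolding Delta_def L[symmetric] powr_diff pn pL ..
  have "log (real q) (real n) \<le> real (ceil_log q n)" unfolding L by simp
  then have "real q powr log (real q) (real n) \<le> real q powr real (ceil_log q n)" using q0 by simp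
  then show "real n \<le> real q ^ ceil_log q n" using pn pL by simp
  have "real (ceil_log q n) < log (real q) (real n) + 1" unfolding L by linarith
  then have "real q powr real (ceil_log q n) < real q powr (log (real q) (real n) + 1)" using q0 by simp
  then show "real q ^ ceil_log q n < real q * real n" using pn pL q0 by (simp add: powr_add mult.commute)
qed

lemma powr_Fq_Delta:
  assumes n: "1 \<le> n"
  shows "real q powr Fq q (Delta q n) = max (phi q (real q ^ 2 * (real n / real q ^ ceil_log q n)))
     (max (phi q (real q * (real n / real q ^ ceil_log q n))) (phi q (real n / real q ^ ceil_log q n)))"
proof -
  have q0: "0 < real q" using q_ge_2 by auto
  show ?thesis unfolding powr_Fq_eq_max_phi powr_add ceil_log_bounds(1)[OF n] using q0
    by (simp add: powr_numeral power2_eq_square mult.commute)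
qed

lemma powr_Fq_Delta_ge:
  assumes n: "1 \<le> n"
  shows "exp (- real q) \<le> real q powr Fq q (Delta q n)"
proof -
  define w where "w = real n / real q ^ ceil_log q n"
  have q0: "0 < real q" using q_ge_2 by auto
  have w1: "w \<le> 1" unfolding w_def using ceil_log_bounds(2)[OF n] q0 by (subst pos_divide_le_eq) auto
  have qw: "1 < real q * w" unfolding w_def using ceil_log_bounds(3)[OF n] q0 by (simp add: less_divide_eq_1_pos)
  have "((real q - 1) / real q) * (real q * w) \<le> 1 * real q"
    using ratio_q_bounds w1 qw q0 by (intro mult_mono) auto
  then have "exp (- real q) \<le> exp (- ((real q - 1) / real q) * (real q * w))" by simp
  then have "1 * exp (- real q) \<le> phi q (real q * w)" unfolding phi_def
    using qw by (intro mult_mono) auto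
  then show ?thesis unfolding powr_Fq_Delta[OF n] w_def by simp
qed

lemma phi_le_powr_Fq_Delta:
  assumes n: "1 \<le> n"
  shows "phi q (real n / real q ^ k) \<le> real q powr Fq q (Delta q n)"
proof -
  define L where "L = ceil_log q n"
  define w where "w = real n / real q ^ L"
  have q0: "0 < real q" "1 < real q" using q_ge_2 by auto
  have w1: "w \<le> 1" unfolding w_def L_def using ceil_log_bounds(2)[OF n] q0 by (subst pos_divide_le_eq) auto
  have qw: "1 < real q * w" unfolding w_def L_def using ceil_log_bounds(3)[OF n] q0 by (simp add: less_divide_eq_1_pos)
  have w0: "0 < w" unfolding w_def using n q0 by simp
  have G: "real q powr Fq q (Delta q n) = max (phi q (real q ^ 2 * w)) (max (phi q (real q * w)) (phi q w))"
    unfolding powr_Fq_Delta[OF n] w_def L_def ..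
  have b1: "1 \<le> real q / (real q - 1)" using q_ge_2 by (simp add: field_simps)
  have b2: "real q / (real q - 1) \<le> real q"
    using q_ge_2 by (simp add: field_simps)
  consider "L \<le> k" | "k + 1 = L" | "k + 2 \<le> L" by linarith
  then show ?thesis
  proof cases
    case 1
    have "real q ^ L \<le> real q ^ k" using 1 q0 by (simp add: power_increasing)
    then have "real n / real q ^ k \<le> w" unfolding w_def using q0
      by (intro divide_left_mono) auto
    then have "phi q (real n / real q ^ k) \<le> phi q w"
      using w1 b1 by (intro phi_mono_below_peak) auto
    then show ?thesis unfolding G by simp
  next
    case 2
    have "real n / real q ^ k = real q * w" unfolding w_def 2[symmetric] using q0 by simp
    then show ?thesis unfolding G by simp
  next
    case 3
    have e: "real q ^ L = real q ^ k * real q ^ (L - k)" using 3 by (simp flip: power_add)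
    have "real n / real q ^ k = real q ^ (L - k) * w" unfolding w_def e using q0 by simp
    moreover have "real q ^ 2 \<le> real q ^ (L - k)" using 3 q0 by (intro power_increasing) auto
    ultimately have le: "real q ^ 2 * w \<le> real n / real q ^ k" using w0 by (simp add: mult_right_mono)
    have "real q < real q ^ 2 * w" using qw q0 by (simp add: power2_eq_square)
    then have "phi q (real n / real q ^ k) \<le> phi q (real q ^ 2 * w)"
      using b2 le by (intro phi_antimono_above_peak) auto
    then show ?thesis unfolding G by simp
  qed
qed

end

definition C1k_ratio :: "nat \<Rightarrow> nat \<Rightarrow> nat \<Rightarrow> real" where
  "C1k_ratio q n k = real (card (C1k n q k)) / ((real q ^ n / real n) * ((real q - 1) / real q)^2)"

definition C1_ratio :: "nat \<Rightarrow> nat \<Rightarrow> real" where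
  "C1_ratio q n = real (C1 n q) / ((real q ^ n / real n) * ((real q - 1) / real q)^2)"

definition upper_factor :: "nat \<Rightarrow> nat \<Rightarrow> real" where
  "upper_factor q k = exp ((2 * real k + 2) * run_rate q k)"

definition damping_excess :: "nat \<Rightarrow> nat \<Rightarrow> real" where
  "damping_excess q k = (1 + 2 * damped_rate q k) / (1 - 2 * real k * run_rate q k) - 1"

definition lower_factor :: "nat \<Rightarrow> nat \<Rightarrow> real" where
  "lower_factor q k = (1 - 1 / real q ^ k) * exp (- (real q ^ 2 * damping_excess q k))"

context q_ary
begin

lemma C1k_ratio_eq:
  assumes n: "n = k + m + 2"
  shows "C1k_ratio q n k = (real n / real q ^ k) * runfree_density q k m"
proof -
  have qq: "real q ^ n = real q ^ k * real q ^ m * real q ^ 2"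
    unfolding n by (simp add: power_add power2_eq_square)
  have "real (card (C1k n q k)) = (real q - 1)^2 * real (runfree_count q k m)"
    using card_C1k[OF n, of q] q_ge_2 by (simp add: of_nat_diff)
  then show ?thesis unfolding C1k_ratio_def runfree_density_def qq using q_ge_2 n
    by (simp add: field_simps)
qed

lemma run_rate_mult: "run_rate q k * real n = ((real q - 1) / real q) * (real n / real q ^ k)"
  unfolding run_rate_def by (simp add: field_simps)

lemma C1k_ratio_le_phi:
  assumes k: "1 \<le> k" and n: "k + 2 \<le> n"
  shows "C1k_ratio q n k \<le> phi q (real n / real q ^ k) * upper_factor q k"
proof -
  define m where "m = n - k - 2"
  have n': "n = k + m + 2" using n unfolding m_def by simp
  have "C1k_ratio q n k = (real n / real q ^ k) * runfree_density q k m"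
    by (rule C1k_ratio_eq[OF n'])
  also have "\<dots> \<le> (real n / real q ^ k) * exp (- run_rate q k * (real m - real k))"
    using runfree_density_le_exp[OF k] by (intro mult_left_mono) auto
  also have "- run_rate q k * (real m - real k)
      = - (run_rate q k * real n) + (2 * real k + 2) * run_rate q k"
    unfolding n' by (simp add: algebra_simps)
  also have "(real n / real q ^ k) * exp (- (run_rate q k * real n) + (2 * real k + 2) * run_rate q k)
      = phi q (real n / real q ^ k) * upper_factor q k"
    unfolding phi_def upper_factor_def run_rate_mult exp_add by (simp add: algebra_simps)
  finally show ?thesis .
qed

text \<open>With \<open>x\<close> the damped rate, \<open>n (x + 2x\<^sup>2) = b u (1 + \<eta>)\<close> where \<open>u = n/q\<^sup>k\<close>, \<open>b = (q - 1)/q\<close>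
  and \<open>\<eta>\<close> is the damping excess; the hypothesis \<open>u \<le> q\<^sup>2\<close> keeps the error term \<open>b u \<eta>\<close> below
  \<open>q\<^sup>2 \<eta>\<close>, which is \<open>o(1)\<close> as \<open>k \<rightarrow> \<infinity>\<close>.\<close>

lemma C1k_ratio_ge_phi:
  assumes k: "1 \<le> k" and n: "k + 2 \<le> n" and small: "4 * real k * run_rate q k \<le> 1"
    and u_le: "real n / real q ^ k \<le> real q ^ 2"
  shows "phi q (real n / real q ^ k) * lower_factor q k \<le> C1k_ratio q n k"
proof -
  define m where "m = n - k - 2"
  define u where "u = real n / real q ^ k"
  define b where "b = (real q - 1) / real q"
  define x where "x = damped_rate q k"
  define \<eta> where "\<eta> = damping_excess q k"
  have n': "n = k + m + 2" using n unfolding m_def by simp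
  have x: "0 \<le> x" "x \<le> 1/2" using damped_rate_bounds[OF k small] unfolding x_def by auto
  have pos: "1/2 \<le> 1 - 2 * real k * run_rate q k" using small by simp
  have "0 \<le> real k * run_rate q k" using run_rate_pos[OF k] by simp
  then have "1 - 2 * real k * run_rate q k \<le> 1 + 2 * x" using x by linarith
  then have \<eta>0: "0 \<le> \<eta>" unfolding \<eta>_def damping_excess_def x_def using pos by (simp add: field_simps)
  have b: "0 \<le> b" "b \<le> 1" unfolding b_def using q_ge_2 by auto
  have u0: "0 \<le> u" unfolding u_def by simp
  have "real n * (x + 2 * x^2) = real n * x * (1 + 2 * x)" by (simp add: power2_eq_square algebra_simps)
  also have "\<dots> = (run_rate q k * real n) * (1 + 2 * x) / (1 - 2 * real k * run_rate q k)"
    by (simp add: x_def damped_rate_def)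
  also have "\<dots> = b * u * (1 + \<eta>)"
    unfolding run_rate_mult \<eta>_def damping_excess_def b_def u_def x_def using pos by (simp add: field_simps)
  finally have key: "real n * (x + 2 * x^2) = b * u * (1 + \<eta>)" .
  have "b * u * \<eta> \<le> 1 * real q ^ 2 * \<eta>"
    using b u_le u0 \<eta>0 unfolding u_def[symmetric] by (intro mult_right_mono mult_mono) auto
  moreover have "real m * (x + 2 * x^2) \<le> real n * (x + 2 * x^2)"
    using x n' by (intro mult_right_mono) auto
  ultimately have "exp (- b * u) * exp (- (real q ^ 2 * \<eta>)) \<le> exp (- real m * (x + 2 * x^2))"
    using key by (simp add: algebra_simps flip: exp_add)
  moreover have "0 \<le> 1 - 1 / real q ^ k" using q_ge_2 by (simp add: field_simps one_le_power)
  ultimately have "(1 - 1 / real q ^ k) * (exp (- b * u) * exp (- (real q ^ 2 * \<eta>)))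
      \<le> (1 - 1 / real q ^ k) * exp (- real m * (x + 2 * x^2))"
    by (rule mult_left_mono)
  also have "\<dots> \<le> runfree_density q k m"
    using runfree_density_ge_exp[OF k small, of m] unfolding x_def .
  finally have "u * ((1 - 1 / real q ^ k) * (exp (- b * u) * exp (- (real q ^ 2 * \<eta>))))
      \<le> u * runfree_density q k m"
    using u0 by (intro mult_left_mono) auto
  moreover have "C1k_ratio q n k = u * runfree_density q k m"
    unfolding u_def by (rule C1k_ratio_eq[OF n'])
  ultimately show ?thesis
    unfolding phi_def lower_factor_def u_def[symmetric] b_def[symmetric] \<eta>_def[symmetric]
    by (simp add: algebra_simps)
qed

lemma C1k_ratio_last_le:
  assumes n: "2 \<le> n"
  shows "C1k_ratio q n (n - 1) \<le> real n * real q ^ 2 / real q ^ n"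
proof -
  have c: "real (card (C1k n q (n - 1))) \<le> real q - 1"
    using card_C1k_last_le[OF n, of q] q_ge_2 by (simp add: of_nat_diff)
  have D: "0 < (real q ^ n / real n) * ((real q - 1) / real q)^2" using q_ge_2 n by simp
  have "C1k_ratio q n (n - 1) \<le> (real q - 1) / ((real q ^ n / real n) * ((real q - 1) / real q)^2)"
    unfolding C1k_ratio_def using c D by (intro divide_right_mono) auto
  also have "\<dots> = real n * real q ^ 2 / (real q ^ n * (real q - 1))"
  proof -
    define a where "a = real q - 1"
    have a: "0 < a" unfolding a_def using q_ge_2 by simp
    show ?thesis unfolding a_def[symmetric] using a q_ge_2 n by (simp add: field_simps power2_eq_square)
  qed
  also have "\<dots> \<le> real n * real q ^ 2 / real q ^ n"
    using q_ge_2 by (intro divide_left_mono) (auto simp: mult_le_cancel_left1)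
  finally show ?thesis .
qed

lemma upper_factor_le: "upper_factor q k \<le> exp 2"
proof -
  have "1 + real (k + 1) * (real q - 1) \<le> (1 + (real q - 1)) ^ (k + 1)"
    by (rule Bernoulli_inequality) (use q_ge_2 in simp)
  then have "real (k + 1) * (real q - 1) \<le> real q ^ (k + 1)" by simp
  then have "(2 * real k + 2) * run_rate q k \<le> 2" unfolding run_rate_def using q_ge_2
    by (simp add: field_simps)
  then show ?thesis unfolding upper_factor_def by simp
qed

lemma C1k_ratio_le_const:
  assumes k: "1 \<le> k" "k \<le> K" and n: "k + 2 \<le> n"
  shows "C1k_ratio q n k \<le> 16 * exp 2 * real q ^ K / real n"
proof -
  define u where "u = real n / real q ^ k"
  have u0: "0 < u" unfolding u_def using n q_ge_2 by simp
  have "C1k_ratio q n k \<le> phi q u * upper_factor q k"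
    unfolding u_def using C1k_ratio_le_phi k n by simp
  also have "\<dots> \<le> (16 / u) * exp 2"
    using phi_le_inverse[OF u0] upper_factor_le phi_nonneg[of u] u0
    by (intro mult_mono) (auto simp: upper_factor_def)
  also have "\<dots> = 16 * exp 2 * real q ^ k / real n" unfolding u_def using n q_ge_2 by simp
  also have "\<dots> \<le> 16 * exp 2 * real q ^ K / real n"
    using k q_ge_2 by (intro divide_right_mono mult_left_mono power_increasing) auto
  finally show ?thesis .
qed

lemma C1_ratio_attained: "2 \<le> n \<Longrightarrow> \<exists>k\<in>{1..<n}. C1_ratio q n = C1k_ratio q n k"
proof -
  assume "2 \<le> n"
  then have "C1 n q \<in> (\<lambda>k. card (C1k n q k)) ` {1..<n}"
    unfolding C1_def by (intro Max_in) auto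
  then show ?thesis unfolding C1_ratio_def C1k_ratio_def by auto
qed

lemma C1k_ratio_le_C1_ratio: "1 \<le> k \<Longrightarrow> k < n \<Longrightarrow> C1k_ratio q n k \<le> C1_ratio q n"
  unfolding C1k_ratio_def C1_ratio_def C1_def using q_ge_2
  by (intro divide_right_mono) (auto intro!: Max_ge)

lemma run_rate_eq_power: "run_rate q k = ((real q - 1) / real q) * (1 / real q) ^ k"
  unfolding run_rate_def by (simp add: field_simps power_one_over)

lemma run_rate_lim: "(\<lambda>k. run_rate q k) \<longlonglongrightarrow> 0"
  unfolding run_rate_eq_power using q_ge_2 by (intro tendsto_mult_right_zero LIMSEQ_realpow_zero) auto

lemma k_run_rate_lim: "(\<lambda>k. real k * run_rate q k) \<longlonglongrightarrow> 0"
proof -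
  have "(\<lambda>k. real k / real q ^ k) \<longlonglongrightarrow> 0"
    using lim_n_over_pown[of "real q"] q_ge_2 by simp
  then have "(\<lambda>k. ((real q - 1) / real q) * (real k / real q ^ k)) \<longlonglongrightarrow> 0"
    by (rule tendsto_mult_right_zero)
  moreover have "\<And>k. ((real q - 1) / real q) * (real k / real q ^ k) = real k * run_rate q k"
    unfolding run_rate_eq_power by (simp add: power_one_over)
  ultimately show ?thesis by simp
qed

lemma upper_factor_lim: "(\<lambda>k. upper_factor q k) \<longlonglongrightarrow> 1"
proof -
  have "(\<lambda>k. exp (2 * (real k * run_rate q k) + 2 * run_rate q k)) \<longlonglongrightarrow> exp (2 * 0 + 2 * 0)"
    by (intro tendsto_intros k_run_rate_lim run_rate_lim)
  then show ?thesis unfolding upper_factor_def by (simp add: algebra_simps)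
qed

lemma lower_factor_lim: "(\<lambda>k. lower_factor q k) \<longlonglongrightarrow> 1"
proof -
  have "(\<lambda>k. damped_rate q k) \<longlonglongrightarrow> 0 / (1 - 2 * 0)"
    unfolding damped_rate_def mult.assoc by (intro tendsto_intros run_rate_lim k_run_rate_lim) simp
  then have "(\<lambda>k. damping_excess q k) \<longlonglongrightarrow> (1 + 2 * 0) / (1 - 2 * 0) - 1"
    unfolding damping_excess_def mult.assoc by (intro tendsto_intros k_run_rate_lim) simp_all
  moreover have "(\<lambda>k. 1 / real q ^ k) \<longlonglongrightarrow> 0"
    using LIMSEQ_realpow_zero[of "1 / real q"] q_ge_2 by (simp add: power_one_over)
  ultimately have "(\<lambda>k. lower_factor q k) \<longlonglongrightarrow> (1 - 0) * exp (- (real q ^ 2 * 0))"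
    unfolding lower_factor_def by (intro tendsto_intros) simp_all
  then show ?thesis by simp
qed

lemma add_3_le_two_power: "3 \<le> a \<Longrightarrow> a + 3 \<le> (2::nat) ^ a"
  by (induction a rule: dec_induct) auto

lemma ceil_log_gt:
  assumes "real q ^ K < real n"
  shows "K < ceil_log q n"
proof -
  have "1 \<le> real q ^ K" using q_ge_2 by (simp add: one_le_power)
  then have "1 \<le> n" using assms by linarith
  then have "real q ^ K < real q ^ ceil_log q n" using assms ceil_log_bounds(2)[of n] by linarith
  then show ?thesis using q_ge_2 by (intro power_less_imp_less_exp[of "real q"]) auto
qed

lemma ceil_log_add_2_le:
  assumes n: "6 \<le> n"
  shows "ceil_log q n + 2 \<le> n"
proof (cases "ceil_log q n \<le> 4")
  case False
  define L where "L = ceil_log q n"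
  have "real q * real q ^ (L - 1) < real q * real n"
    using ceil_log_bounds(3)[of n] n False unfolding L_def by (simp flip: power_Suc)
  then have "real q ^ (L - 1) < real n" using q_ge_2 by simp
  moreover have "(L - 1) + 3 \<le> 2 ^ (L - 1)" using False by (intro add_3_le_two_power) (simp add: L_def)
  moreover have "(2::nat) ^ (L - 1) \<le> q ^ (L - 1)" using q_ge_2 by (intro power_mono) auto
  ultimately have "real ((L - 1) + 3) < real n" by (metis of_nat_le_iff of_nat_power le_trans le_less_trans)
  then show ?thesis using False unfolding L_def by simp
qed (use n in simp)

lemma powr_Fq_Delta_attained:
  assumes n: "1 \<le> n" and L: "2 \<le> ceil_log q n"
  obtains j where "j \<le> 2" "real q powr Fq q (Delta q n) = phi q (real n / real q ^ (ceil_log q n - j))"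
    "real n / real q ^ (ceil_log q n - j) \<le> real q ^ 2"
proof -
  define w where "w = real n / real q ^ ceil_log q n"
  have w1: "w \<le> 1" unfolding w_def using ceil_log_bounds(2)[OF n] q_ge_2 by simp
  have w0: "0 \<le> w" unfolding w_def by simp
  have scale: "real n / real q ^ (ceil_log q n - j) = real q ^ j * w" if "j \<le> 2" for j
  proof -
    have "real q ^ ceil_log q n = real q ^ (ceil_log q n - j) * real q ^ j"
      using that L by (simp flip: power_add)
    then show ?thesis unfolding w_def using q_ge_2 by (simp add: field_simps)
  qed
  have "\<exists>j\<le>2. real q powr Fq q (Delta q n) = phi q (real q ^ j * w)"
    unfolding powr_Fq_Delta[OF n] w_def[symmetric]
    by (cases "phi q (real q ^ 2 * w) \<le> max (phi q (real q * w)) (phi q w)";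
        cases "phi q (real q * w) \<le> phi q w")
      (auto simp: max_def intro: exI[of _ 0] exI[of _ 1] exI[of _ 2])
  then obtain j where j: "j \<le> 2" "real q powr Fq q (Delta q n) = phi q (real q ^ j * w)" by blast
  moreover have "real q ^ j * w \<le> real q ^ 2 * 1"
    using w0 w1 j q_ge_2 by (intro mult_mono power_increasing) auto
  ultimately show ?thesis using that scale by simp
qed

end

lemma LIMSEQ_quotient_one:
  fixes f g :: "nat \<Rightarrow> real"
  assumes g: "\<And>n. 0 < g n"
    and bounds: "\<And>e. 0 < e \<Longrightarrow>
      eventually (\<lambda>n. (1 - e) * g n \<le> f n \<and> f n \<le> (1 + e) * g n) sequentially"
  shows "(\<lambda>n. f n / g n) \<longlonglongrightarrow> 1"
proof (rule tendstoI)
  fix r :: real assume r: "0 < r"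
  have "eventually (\<lambda>n. (1 - r / 2) * g n \<le> f n \<and> f n \<le> (1 + r / 2) * g n) sequentially"
    using bounds r by simp
  then show "eventually (\<lambda>n. dist (f n / g n) 1 < r) sequentially"
  proof eventually_elim
    case (elim n)
    then have "1 - r / 2 \<le> f n / g n" "f n / g n \<le> 1 + r / 2"
      using g[of n] by (simp_all add: field_simps)
    then show ?case using r by (simp add: dist_real_def abs_less_iff)
  qed
qed

context q_ary
begin

text \<open>The maximising \<open>k\<close> is \<open>n - 1\<close> or bounded, both contributing \<open>o(1)\<close> while
  \<open>q\<^bsup>F(\<Delta>\<^sub>n)\<^esup> \<ge> e\<^sup>-\<^sup>q\<close>, or it is large, and then \<open>\<phi>(n/q\<^sup>k) \<le> q\<^bsup>F(\<Delta>\<^sub>n)\<^esup>\<close>.\<close>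

lemma C1_ratio_eventually_le:
  assumes e: "0 < e"
  shows "eventually (\<lambda>n. C1_ratio q n \<le> (1 + e) * real q powr Fq q (Delta q n)) sequentially"
proof -
  have "eventually (\<lambda>k. upper_factor q k < 1 + e) sequentially"
    using e by (intro order_tendstoD(2)[OF upper_factor_lim]) simp
  then obtain K where K: "\<And>k. K \<le> k \<Longrightarrow> upper_factor q k \<le> 1 + e"
    unfolding eventually_sequentially by (meson less_imp_le)
  define c where "c = e * exp (- real q)"
  have c: "0 < c" unfolding c_def using e by simp
  have "(\<lambda>n. real q ^ 2 * (real n / real q ^ n)) \<longlonglongrightarrow> real q ^ 2 * 0"
    using q_ge_2 by (intro tendsto_intros lim_n_over_pown) auto
  then have "eventually (\<lambda>n. real q ^ 2 * (real n / real q ^ n) < c) sequentially"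
    using c by (intro order_tendstoD(2)) auto
  moreover have "eventually (\<lambda>n. 16 * exp 2 * real q ^ K / real n < c) sequentially"
    using order_tendstoD(2)[OF lim_const_over_n c] .
  moreover have "eventually (\<lambda>n. 2 \<le> n) sequentially" by (rule eventually_ge_at_top)
  ultimately show ?thesis
  proof eventually_elim
    case (elim n)
    define G where "G = real q powr Fq q (Delta q n)"
    have "c \<le> e * G"
      unfolding c_def G_def using powr_Fq_Delta_ge[of n] elim e by (intro mult_left_mono) auto
    also have "\<dots> \<le> (1 + e) * G" using powr_Fq_pos unfolding G_def by (simp add: algebra_simps)
    finally have cG: "c \<le> (1 + e) * G" .
    obtain k where k: "k \<in> {1..<n}" "C1_ratio q n = C1k_ratio q n k"
      using C1_ratio_attained[OF \<open>2 \<le> n\<close>] by auto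
    consider "k = n - 1" | "k + 2 \<le> n" "k < K" | "k + 2 \<le> n" "K \<le> k" using k(1) by fastforce
    then have "C1k_ratio q n k \<le> (1 + e) * G"
    proof cases
      case 1
      have "C1k_ratio q n k \<le> real n * real q ^ 2 / real q ^ n"
        unfolding 1 using C1k_ratio_last_le \<open>2 \<le> n\<close> .
      also have "\<dots> = real q ^ 2 * (real n / real q ^ n)" by simp
      finally show ?thesis using elim(1) cG by linarith
    next
      case 2
      then have "C1k_ratio q n k \<le> 16 * exp 2 * real q ^ K / real n"
        using C1k_ratio_le_const[of k K n] k(1) by simp
      then show ?thesis using elim(2) cG by linarith
    next
      case 3
      have "C1k_ratio q n k \<le> phi q (real n / real q ^ k) * upper_factor q k"
        using C1k_ratio_le_phi k(1) 3 by simp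
      also have "\<dots> \<le> G * (1 + e)"
        unfolding G_def using phi_le_powr_Fq_Delta[of n k] K[OF 3(2)] \<open>2 \<le> n\<close>
          phi_nonneg[of "real n / real q ^ k"]
        by (intro mult_mono) (auto simp: upper_factor_def)
      finally show ?thesis by (simp add: mult.commute)
    qed
    then show ?case unfolding k(2) G_def .
  qed
qed

text \<open>Choose \<open>k\<close> such that \<open>n/q\<^sup>k\<close> is the point at which the maximum defining
  \<open>F(\<Delta>\<^sub>n)\<close> is attained.\<close>

lemma C1_ratio_eventually_ge:
  assumes e: "0 < e"
  shows "eventually (\<lambda>n. (1 - e) * real q powr Fq q (Delta q n) \<le> C1_ratio q n) sequentially"
proof -
  have "eventually (\<lambda>k. 1 - e < lower_factor q k) sequentially"
    using e by (intro order_tendstoD(1)[OF lower_factor_lim]) simp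
  moreover have "eventually (\<lambda>k. real k * run_rate q k < 1/4) sequentially"
    by (intro order_tendstoD(2)[OF k_run_rate_lim]) simp
  ultimately have "eventually (\<lambda>k. 1 - e < lower_factor q k \<and> real k * run_rate q k < 1/4) sequentially"
    by eventually_elim simp
  then obtain K where K: "\<And>k. K \<le> k \<Longrightarrow> 1 - e < lower_factor q k \<and> real k * run_rate q k < 1/4"
    unfolding eventually_sequentially by blast
  have "eventually (\<lambda>n. q ^ (K + 2) < n) sequentially" by (rule eventually_gt_at_top)
  moreover have "eventually (\<lambda>n. 6 \<le> n) sequentially" by (rule eventually_ge_at_top)
  ultimately show ?thesis
  proof eventually_elim
    case (elim n)
    have "real q ^ (K + 2) < real n" using elim(1) by (metis of_nat_less_iff of_nat_power)
    then have L: "K + 2 < ceil_log q n" by (rule ceil_log_gt)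
    have n: "1 \<le> n" using elim(2) by simp
    from powr_Fq_Delta_attained[OF n] L obtain j where j: "j \<le> 2"
      "real q powr Fq q (Delta q n) = phi q (real n / real q ^ (ceil_log q n - j))"
      "real n / real q ^ (ceil_log q n - j) \<le> real q ^ 2"
      by auto
    define k where "k = ceil_log q n - j"
    have kK: "K \<le> k" and k1: "1 \<le> k" using L j(1) unfolding k_def by auto
    have kn: "k + 2 \<le> n" using ceil_log_add_2_le[OF elim(2)] unfolding k_def by simp
    have h: "4 * real k * run_rate q k \<le> 1" using K[OF kK] by simp
    have "(1 - e) * real q powr Fq q (Delta q n) \<le> lower_factor q k * phi q (real n / real q ^ k)"
      using K[OF kK] phi_nonneg[of "real n / real q ^ k"] unfolding j(2) k_def
      by (intro mult_right_mono) auto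
    also have "\<dots> \<le> C1k_ratio q n k"
      using C1k_ratio_ge_phi[OF k1 kn h] j(3) unfolding k_def by (simp add: mult.commute)
    also have "\<dots> \<le> C1_ratio q n" using C1k_ratio_le_C1_ratio[OF k1] kn by simp
    finally show ?case .
  qed
qed

lemma C1_normalised_lim:
  "(\<lambda>n. real (C1 n q) / ((real q ^ n / real n) * ((real q - 1) / real q)^2
      * real q powr Fq q (Delta q n))) \<longlonglongrightarrow> 1"
proof -
  have "(\<lambda>n. C1_ratio q n / real q powr Fq q (Delta q n)) \<longlonglongrightarrow> 1"
    using powr_Fq_pos C1_ratio_eventually_le C1_ratio_eventually_ge
    by (intro LIMSEQ_quotient_one) (auto intro: eventually_conj)
  then show ?thesis unfolding C1_ratio_def by simp
qed

lemma C1_density_peak_lim: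
  assumes s: "strict_mono s" and peak: "(\<lambda>i. Delta q (s i)) \<longlonglongrightarrow> - log (real q) (real q - 1)"
  shows "(\<lambda>i. real (C1 (s i) q) * real (s i) / real q ^ (s i)) \<longlonglongrightarrow> (real q - 1) / (exp 1 * real q)"
proof -
  define X where "X n = real (C1 n q) / ((real q ^ n / real n) * ((real q - 1) / real q)^2
    * real q powr Fq q (Delta q n))" for n
  have "(\<lambda>i. X (s i) * (((real q - 1) / real q)^2 * real q powr Fq q (Delta q (s i))))
      \<longlonglongrightarrow> 1 * (((real q - 1) / real q)^2 * real q powr Fq q (- log (real q) (real q - 1)))"
    using LIMSEQ_subseq_LIMSEQ[OF C1_normalised_lim s] unfolding X_def o_def
    by (intro tendsto_intros tendsto_powr_Fq peak)
  moreover have "((real q - 1) / real q)^2 * real q powr Fq q (- log (real q) (real q - 1))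
      = (real q - 1) / (exp 1 * real q)"
    unfolding powr_Fq_peak using q_ge_2 by (simp add: field_simps power2_eq_square exp_minus)
  moreover have "X n * (((real q - 1) / real q)^2 * real q powr Fq q (Delta q n))
      = real (C1 n q) * real n / real q ^ n" for n
    unfolding X_def using powr_Fq_pos[of "Delta q n"] q_ge_2 by (cases "n = 0") (simp_all add: field_simps)
  ultimately show ?thesis by simp
qed

end

theorem theorem2:
  fixes q :: nat
  assumes "q \<ge> 2"
  shows "((\<lambda>n. real (C1 n q) /
            ((real q ^ n / real n) * ((real q - 1) / real q)^2 * real q powr Fq q (Delta q n)))
           \<longlonglongrightarrow> 1)
    \<and> (\<forall>d. -1 < d \<and> d \<le> 0 \<longrightarrow>
           ((real q - 1) / real q)^2 * real q powr Fq q d \<le> (real q - 1) / (exp 1 * real q))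
    \<and> (\<forall>s::nat \<Rightarrow> nat. strict_mono s \<and>
           (\<lambda>i. Delta q (s i)) \<longlonglongrightarrow> - log (real q) (real q - 1) \<longrightarrow>
           (\<lambda>i. real (C1 (s i) q) * real (s i) / real q ^ (s i))
             \<longlonglongrightarrow> (real q - 1) / (exp 1 * real q))"
proof -
  interpret q_ary q by (rule q_ary.intro) (fact assms)
  show ?thesis using C1_normalised_lim Fq_coefficient_le C1_density_peak_lim by blast
qed

end
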